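(* Let $X,Y$ be Banach spaces and let $T:X\to Y$ be a hereditary-SCD-operator. Then for every $x^*\in X^*$ the operator $T\tilde{+}\mathrm{Re}\,x^*:X\to Y\oplus_1\mathbb{R}$, $x\mapsto(Tx,\mathrm{Re}\,x^*(x))$, is an SCD-operator, i.e. $[T\tilde{+}\mathrm{Re}\,x^*](B_X)$ is an SCD set.
   Context: $B_X$ is the closed unit ball of $X$. $Y\oplus_1\mathbb{R}$ is the direct sum (viewed as a real Banach space) with norm $\|(y,t)\|=\|y\|+|t|$. A slice of a convex bounded set $A$ is $S(A,z^*,\varepsilon)=\{a\in A:\ \mathrm{Re}\,z^*(a)>\sup\mathrm{Re}\,z^*(A)-\varepsilon\}$; $A$ is an SCD set if there is a sequence $(S_n)$ of slices of $A$ such that $A\subseteq\overline{\mathrm{conv}}(B)$ for every $B\subseteq A$ intersecting all the $S_n$. An operator $S:X\to Z$ is an SCD-operator if $S(B_X)$ is an SCD set; $T:X\to Y$ is a hereditary-SCD-operator if every convex subset of $T(B_X)$ is an SCD set. *)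

theory Defs
  imports "HOL-Analysis.Analysis"
begin

definition slice :: "'a::real_normed_vector set \<Rightarrow> ('a \<Rightarrow> real) \<Rightarrow> real \<Rightarrow> 'a set" where
  "slice A f eps = {a \<in> A. f a > Sup (f ` A) - eps}"

definition is_slice :: "'a::real_normed_vector set \<Rightarrow> 'a set \<Rightarrow> bool" where
  "is_slice A S \<longleftrightarrow> (\<exists>f eps. bounded_linear f \<and> eps > 0 \<and> S = slice A f eps)"

definition SCD_set :: "'a::real_normed_vector set \<Rightarrow> bool" where
  "SCD_set A \<longleftrightarrow> convex A \<and> bounded A \<and>
     (\<exists>S :: nat \<Rightarrow> 'a set. (\<forall>n. is_slice A (S n)) \<and>
        (\<forall>B. B \<subseteq> A \<longrightarrow> (\<forall>n. B \<inter> S n \<noteq> {}) \<longrightarrow> A \<subseteq> closure (convex hull B)))"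

definition SCD_operator :: "('a::real_normed_vector \<Rightarrow> 'b::real_normed_vector) \<Rightarrow> bool" where
  "SCD_operator S \<longleftrightarrow> bounded_linear S \<and> SCD_set (S ` cball 0 1)"

definition hereditary_SCD_operator :: "('a::real_normed_vector \<Rightarrow> 'b::real_normed_vector) \<Rightarrow> bool" where
  "hereditary_SCD_operator T \<longleftrightarrow> bounded_linear T \<and>
     (\<forall>C. C \<subseteq> T ` cball 0 1 \<longrightarrow> convex C \<longrightarrow> SCD_set C)"

end

theory Submission
  imports Defs
begin

text \<open>Let \<open>A = {(T x, x\<^sup>* x) | x \<in> B\<^sub>X}\<close>. For \<open>c = \<plusminus>1\<close> and rational \<open>r\<close> the cuts
  \<open>{y | (y, t) \<in> A, c t > r} = T {x \<in> B\<^sub>X | c x\<^sup>* x > r}\<close> are convex subsets of \<open>T(B\<^sub>X)\<close>,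
  hence SCD, each with a determining sequence of slices given by functionals \<open>z\<close>. As slices of
  \<open>A\<close> take all slices of width \<open>1/(m+1)\<close> given by \<open>a z(y) + b t\<close> with \<open>a, b\<close> rational:
  countably many. If \<open>B \<subseteq> A\<close> meets them all, these functionals have the same supremum on \<open>A\<close>
  and on \<open>B\<close>, so by separation in the plane \<open>convex hull B\<close> meets every determining slice of
  every cut inside that cut; hence each cut of \<open>A\<close> lies in the closure of the corresponding
  cut of \<open>convex hull B\<close>. Approximating a point \<open>(y, t) \<in> A\<close> from above and from below in
  \<open>t\<close> and interpolating convexly gives \<open>A \<subseteq> closure (convex hull B)\<close>.

  Only the linear and topological structure of \<open>Y \<times> \<real>\<close> enters, so the library's product
  norm may stand in for the sum norm.\<close>

definition determining_slices ::
    "'a::real_normed_vector set \<Rightarrow> (nat \<Rightarrow> 'a \<Rightarrow> real) \<Rightarrow> (nat \<Rightarrow> real) \<Rightarrow> bool" where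
  "determining_slices A f e \<longleftrightarrow> (\<forall>n. bounded_linear (f n) \<and> e n > 0) \<and>
    (\<forall>B \<subseteq> A. (\<forall>n. B \<inter> slice A (f n) (e n) \<noteq> {}) \<longrightarrow> A \<subseteq> closure (convex hull B))"

lemma is_slice_slice: "bounded_linear f \<Longrightarrow> e > 0 \<Longrightarrow> is_slice A (slice A f e)"
  unfolding is_slice_def by blast

lemma SCD_setE:
  fixes A :: "'a::real_normed_vector set"
  assumes "SCD_set A"
  obtains S :: "nat \<Rightarrow> 'a set" where "\<forall>n. is_slice A (S n)"
    and "\<forall>B \<subseteq> A. (\<forall>n. B \<inter> S n \<noteq> {}) \<longrightarrow> A \<subseteq> closure (convex hull B)"
  using assms unfolding SCD_set_def by blast

lemma SCD_set_imp_determining_slices: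
  fixes A :: "'a::real_normed_vector set"
  assumes "SCD_set A"
  shows "\<exists>f e. determining_slices A f e"
proof -
  obtain S :: "nat \<Rightarrow> 'a set" where "\<forall>n. is_slice A (S n)"
    and det: "\<forall>B \<subseteq> A. (\<forall>n. B \<inter> S n \<noteq> {}) \<longrightarrow> A \<subseteq> closure (convex hull B)"
    using assms by (rule SCD_setE)
  then have "\<forall>n. \<exists>f e. bounded_linear f \<and> e > 0 \<and> S n = slice A f e"
    unfolding is_slice_def by blast
  then obtain f :: "nat \<Rightarrow> 'a \<Rightarrow> real" and e
    where "\<forall>n. bounded_linear (f n) \<and> e n > 0 \<and> S n = slice A (f n) (e n)"
    unfolding choice_iff by blast
  then have "determining_slices A f e" using det unfolding determining_slices_def by auto
  then show ?thesis by blast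
qed

lemma Sup_image_le_if_meets_slices:
  fixes f :: "'a::real_normed_vector \<Rightarrow> real"
  assumes "bounded A" "bounded_linear f" "B \<subseteq> A"
    and meets: "\<And>m. B \<inter> slice A f (1 / real (Suc m)) \<noteq> {}"
  shows "Sup (f ` A) \<le> Sup (f ` B)"
proof (rule ccontr)
  have "bdd_above (f ` B)"
    using assms(1-3) by (meson bounded_imp_bdd_above bounded_linear_image bounded_subset)
  assume "\<not> Sup (f ` A) \<le> Sup (f ` B)"
  then obtain m where m: "1 / real (Suc m) < Sup (f ` A) - Sup (f ` B)"
    using reals_Archimedean[of "Sup (f ` A) - Sup (f ` B)"] by (auto simp: inverse_eq_divide)
  obtain p where "p \<in> B" "Sup (f ` A) - 1 / real (Suc m) < f p"
    using meets[of m] by (auto simp: slice_def)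
  moreover have "f p \<le> Sup (f ` B)" using \<open>p \<in> B\<close> \<open>bdd_above (f ` B)\<close> by (simp add: cSup_upper)
  ultimately show False using m by linarith
qed

lemma subset_closure_convex_hull_if_rational_Sup_le:
  fixes P Q :: "(real \<times> real) set"
  assumes "bounded P" "Q \<subseteq> P" "Q \<noteq> {}"
    and Sup_le: "\<And>a b. a \<in> \<rat> \<Longrightarrow> b \<in> \<rat> \<Longrightarrow>
       Sup ((\<lambda>x. a * fst x + b * snd x) ` P) \<le> Sup ((\<lambda>x. a * fst x + b * snd x) ` Q)"
  shows "P \<subseteq> closure (convex hull Q)"
proof
  fix p assume "p \<in> P"
  show "p \<in> closure (convex hull Q)"
  proof (rule ccontr)
    assume "p \<notin> closure (convex hull Q)"
    then obtain w c where wp: "inner w p < c" and wQ: "\<forall>x\<in>closure (convex hull Q). c < inner w x"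
      using separating_hyperplane_closed_point[of "closure (convex hull Q)" p]
      by (auto simp: convex_closure)
    obtain R where "R > 0" and R: "\<forall>x\<in>P. norm x \<le> R"
      using \<open>bounded P\<close> bounded_pos by blast
    define g where "g = c - inner w p"
    define \<eta> where "\<eta> = g / (6 * R)"
    have "g > 0" "\<eta> > 0" using wp \<open>R > 0\<close> by (simp_all add: g_def \<eta>_def)
    \<comment> \<open>A rational functional \<open>h\<close> within \<open>g/3\<close> of the separating functional \<open>-w\<close> on \<open>P\<close>\<close>
    obtain a where "a \<in> \<rat>" "\<bar>a + fst w\<bar> < \<eta>"
      using Rats_dense_in_real[of "- fst w - \<eta>" "- fst w + \<eta>"] \<open>\<eta> > 0\<close>
      by (auto simp: abs_less_iff)
    obtain b where "b \<in> \<rat>" "\<bar>b + snd w\<bar> < \<eta>"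
      using Rats_dense_in_real[of "- snd w - \<eta>" "- snd w + \<eta>"] \<open>\<eta> > 0\<close>
      by (auto simp: abs_less_iff)
    define h where "h = (\<lambda>x::real \<times> real. a * fst x + b * snd x)"
    have approx: "\<bar>h x + inner w x\<bar> \<le> g / 3" if "x \<in> P" for x
    proof -
      have "\<bar>fst x\<bar> \<le> R" "\<bar>snd x\<bar> \<le> R"
        using R that norm_fst_le[of "fst x" "snd x"] norm_snd_le[of "snd x" "fst x"] by auto
      have "\<bar>h x + inner w x\<bar> = \<bar>(a + fst w) * fst x + (b + snd w) * snd x\<bar>"
        by (simp add: h_def inner_prod_def algebra_simps)
      also have "\<dots> \<le> \<bar>a + fst w\<bar> * \<bar>fst x\<bar> + \<bar>b + snd w\<bar> * \<bar>snd x\<bar>"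
        by (metis abs_mult abs_triangle_ineq)
      also have "\<dots> \<le> \<eta> * R + \<eta> * R"
        using \<open>\<bar>a + fst w\<bar> < \<eta>\<close> \<open>\<bar>b + snd w\<bar> < \<eta>\<close> \<open>\<bar>fst x\<bar> \<le> R\<close> \<open>\<bar>snd x\<bar> \<le> R\<close>
        by (intro add_mono mult_mono) auto
      also have "\<dots> = g / 3" using \<open>R > 0\<close> by (simp add: \<eta>_def)
      finally show ?thesis .
    qed
    have "bdd_above (h ` P)"
      unfolding h_def
      by (intro bounded_imp_bdd_above bounded_linear_image[OF \<open>bounded P\<close>] bounded_linear_add
          bounded_linear_const_mult bounded_linear_fst bounded_linear_snd)
    then have "h p \<le> Sup (h ` P)" using \<open>p \<in> P\<close> by (simp add: cSup_upper)
    also have "\<dots> \<le> Sup (h ` Q)" using Sup_le[OF \<open>a \<in> \<rat>\<close> \<open>b \<in> \<rat>\<close>] by (simp add: h_def)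
    also have "\<dots> \<le> g / 3 - c"
    proof (rule cSup_least)
      fix y assume "y \<in> h ` Q"
      then obtain x where "x \<in> Q" "y = h x" by auto
      moreover have "x \<in> closure (convex hull Q)"
        using \<open>x \<in> Q\<close> by (meson closure_subset hull_inc subsetD)
      then have "c < inner w x" using wQ by blast
      moreover have "h x + inner w x \<le> g / 3"
        using approx \<open>x \<in> Q\<close> \<open>Q \<subseteq> P\<close> abs_le_D1 by blast
      ultimately show "y \<le> g / 3 - c" by linarith
    qed (use \<open>Q \<noteq> {}\<close> in simp)
    finally have "h p \<le> g / 3 - c" .
    moreover have "- (h p + inner w p) \<le> g / 3" using abs_le_D2[OF approx[OF \<open>p \<in> P\<close>]] .
    ultimately show False using \<open>g > 0\<close> unfolding g_def by argo
  qed
qed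

lemma convex_near_Pair:
  fixes D :: "('a::real_normed_vector \<times> real) set"
  assumes "convex D" "p \<in> D" "q \<in> D"
    and "dist (fst p) y < \<delta>" "dist (fst q) y < \<delta>" "t - \<delta> < snd p" "snd q < t + \<delta>"
  shows "\<exists>d\<in>D. dist d (y, t) < 2 * \<delta>"
proof -
  have near: "dist d (y, t) < 2 * \<delta>" if "dist (fst d) y < \<delta>" "\<bar>snd d - t\<bar> < \<delta>" for d
  proof -
    have "dist d (y, t) = sqrt ((dist (fst d) y)\<^sup>2 + (dist (snd d) t)\<^sup>2)"
      by (metis dist_Pair_Pair prod.collapse)
    also have "\<dots> \<le> dist (fst d) y + dist (snd d) t"
      by (rule sqrt_sum_squares_le_sum) simp_all
    finally show ?thesis using that by (simp add: dist_real_def)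
  qed
  consider "snd p \<le> t" | "t \<le> snd q" | "snd q < t" "t < snd p" by linarith
  then show ?thesis
  proof cases
    case 1
    then show ?thesis using near[of p] assms by auto
  next
    case 2
    then show ?thesis using near[of q] assms by auto
  next
    case 3
    define u where "u = (t - snd q) / (snd p - snd q)"
    have "0 \<le> u" "u \<le> 1" using 3 by (auto simp: u_def)
    define d where "d = u *\<^sub>R p + (1 - u) *\<^sub>R q"
    have "d \<in> D" using convexD[OF assms(1-3)] \<open>0 \<le> u\<close> \<open>u \<le> 1\<close> by (simp add: d_def)
    have "snd d = snd q + u * (snd p - snd q)" by (simp add: d_def algebra_simps)
    also have "u * (snd p - snd q) = t - snd q" using 3 by (simp add: u_def)
    finally have "snd d = t" by simp
    have "fst p \<in> ball y \<delta>" "fst q \<in> ball y \<delta>" using assms(4,5) by (simp_all add: dist_commute)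
    then have "u *\<^sub>R fst p + (1 - u) *\<^sub>R fst q \<in> ball y \<delta>"
      using \<open>0 \<le> u\<close> \<open>u \<le> 1\<close> by (intro convexD[OF convex_ball]) auto
    then have "fst d \<in> ball y \<delta>" by (simp add: d_def)
    then have "dist (fst d) y < \<delta>" by (simp add: dist_commute)
    moreover have "\<delta> > 0" using assms(4) zero_le_dist[of "fst p" y] by linarith
    ultimately show ?thesis using near[of d] \<open>d \<in> D\<close> \<open>snd d = t\<close> by auto
  qed
qed

definition fst_cut :: "('a \<times> real) set \<Rightarrow> real \<Rightarrow> real \<Rightarrow> 'a set" where
  "fst_cut A c r = fst ` {p \<in> A. r < c * snd p}"

lemma fst_cut_mono: "A \<subseteq> A' \<Longrightarrow> fst_cut A c r \<subseteq> fst_cut A' c r"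
  by (auto simp: fst_cut_def)

lemma fst_cut_subset: "fst_cut A c r \<subseteq> fst ` A"
  by (auto simp: fst_cut_def)

lemma convex_fst_cut:
  fixes A :: "('a::real_vector \<times> real) set"
  assumes "convex A"
  shows "convex (fst_cut A c r)"
proof -
  have "linear (\<lambda>p::'a \<times> real. c * snd p)"
    by (simp add: linear_iff algebra_simps)
  then have "convex ((\<lambda>p::'a \<times> real. c * snd p) -` {r<..})"
    by (rule convex_linear_vimage) simp
  then have "convex (A \<inter> (\<lambda>p. c * snd p) -` {r<..})"
    using \<open>convex A\<close> by (rule convex_Int[rotated])
  moreover have "{p \<in> A. r < c * snd p} = A \<inter> (\<lambda>p. c * snd p) -` {r<..}" by auto
  ultimately have "convex {p \<in> A. r < c * snd p}" by simp
  then show ?thesis unfolding fst_cut_def by (rule convex_linear_image[OF linear_fst])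
qed

lemma subset_closure_if_fst_cuts_close:
  fixes A D :: "('a::real_normed_vector \<times> real) set"
  assumes "convex D"
    and cuts: "\<And>c r. c \<in> {1, -1} \<Longrightarrow> r \<in> \<rat> \<Longrightarrow> fst_cut A c r \<subseteq> closure (fst_cut D c r)"
  shows "A \<subseteq> closure D"
proof
  fix a assume "a \<in> A"
  obtain y t where a: "a = (y, t)" by force
  show "a \<in> closure D" unfolding closure_approachable
  proof (intro allI impI)
    fix \<epsilon> :: real assume "\<epsilon> > 0"
    define \<delta> where "\<delta> = \<epsilon> / 2"
    have "\<delta> > 0" using \<open>\<epsilon> > 0\<close> by (simp add: \<delta>_def)
    have near_cut: "\<exists>p\<in>D. r < c * snd p \<and> dist (fst p) y < \<delta>"
      if "c \<in> {1, -1}" "r \<in> \<rat>" "r < c * t" for c r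
    proof -
      have "y \<in> closure (fst_cut D c r)"
        using cuts[OF that(1,2)] \<open>a \<in> A\<close> that(3) by (force simp: a fst_cut_def)
      then show ?thesis using \<open>\<delta> > 0\<close> by (force simp: closure_approachable fst_cut_def)
    qed
    obtain r where "r \<in> \<rat>" "t - \<delta> < r" "r < t"
      using Rats_dense_in_real[of "t - \<delta>" t] \<open>\<delta> > 0\<close> by auto
    then obtain p where "p \<in> D" "t - \<delta> < snd p" "dist (fst p) y < \<delta>"
      using near_cut[of 1 r] by force
    obtain r' where "r' \<in> \<rat>" "- t - \<delta> < r'" "r' < - t"
      using Rats_dense_in_real[of "- t - \<delta>" "- t"] \<open>\<delta> > 0\<close> by auto
    then obtain q where "q \<in> D" "snd q < t + \<delta>" "dist (fst q) y < \<delta>"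
      using near_cut[of "-1" r'] by force
    show "\<exists>d\<in>D. dist d a < \<epsilon>"
      using convex_near_Pair[OF \<open>convex D\<close> \<open>p \<in> D\<close> \<open>q \<in> D\<close> \<open>dist (fst p) y < \<delta>\<close>
          \<open>dist (fst q) y < \<delta>\<close> \<open>t - \<delta> < snd p\<close> \<open>snd q < t + \<delta>\<close>]
      by (simp add: a \<delta>_def)
  qed
qed

text \<open>In the plane, via \<open>(y, t) \<mapsto> (z y, c t)\<close>, the rational sup condition puts the image of
  \<open>A\<close> into the closure of the image of \<open>convex hull B\<close>, and lying in the slice of the cut is an
  open condition there.\<close>

lemma fst_cut_slice_meets_convex_hull:
  fixes A B :: "('a::real_normed_vector \<times> real) set" and z :: "'a \<Rightarrow> real"
  assumes "convex A" "bounded A" "B \<subseteq> A" "B \<noteq> {}" "c \<in> \<rat>"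
    and "bounded_linear z" "e > 0" "fst_cut A c r \<noteq> {}"
    and Sup_le: "\<And>a b. a \<in> \<rat> \<Longrightarrow> b \<in> \<rat> \<Longrightarrow>
      Sup ((\<lambda>p. a * z (fst p) + b * snd p) ` A) \<le> Sup ((\<lambda>p. a * z (fst p) + b * snd p) ` B)"
  shows "fst_cut (convex hull B) c r \<inter> slice (fst_cut A c r) z e \<noteq> {}"
proof -
  define \<Phi> where "\<Phi> = (\<lambda>p::'a \<times> real. (z (fst p), c * snd p))"
  have "bounded_linear \<Phi>" unfolding \<Phi>_def
    by (intro bounded_linear_Pair bounded_linear_compose[OF \<open>bounded_linear z\<close> bounded_linear_fst]
        bounded_linear_const_mult bounded_linear_snd)
  have "\<Phi> ` A \<subseteq> closure (convex hull (\<Phi> ` B))"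
  proof (rule subset_closure_convex_hull_if_rational_Sup_le)
    show "bounded (\<Phi> ` A)" using \<open>bounded A\<close> \<open>bounded_linear \<Phi>\<close> by (rule bounded_linear_image)
    show "\<Phi> ` B \<subseteq> \<Phi> ` A" "\<Phi> ` B \<noteq> {}" using \<open>B \<subseteq> A\<close> \<open>B \<noteq> {}\<close> by auto
    fix a b :: real assume "a \<in> \<rat>" "b \<in> \<rat>"
    then have "b * c \<in> \<rat>" using \<open>c \<in> \<rat>\<close> by simp
    then show "Sup ((\<lambda>x. a * fst x + b * snd x) ` \<Phi> ` A) \<le> Sup ((\<lambda>x. a * fst x + b * snd x) ` \<Phi> ` B)"
      using Sup_le[OF \<open>a \<in> \<rat>\<close> \<open>b * c \<in> \<rat>\<close>] by (simp add: \<Phi>_def image_image mult.assoc)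
  qed
  then have closure_hull: "\<Phi> ` A \<subseteq> closure (\<Phi> ` (convex hull B))"
    by (simp add: convex_hull_linear_image bounded_linear.linear[OF \<open>bounded_linear \<Phi>\<close>])
  define s where "s = Sup (z ` fst_cut A c r) - e"
  obtain p where "p \<in> A" "r < c * snd p" "s < z (fst p)"
    using less_cSupD[of "z ` fst_cut A c r" s] \<open>fst_cut A c r \<noteq> {}\<close> \<open>e > 0\<close>
    by (auto simp: s_def fst_cut_def)
  define U where "U = {x::real \<times> real. s < fst x \<and> r < snd x}"
  have "open U" unfolding U_def by (intro open_Collect_conj open_Collect_less continuous_intros)
  moreover have "\<Phi> p \<in> U \<inter> closure (\<Phi> ` (convex hull B))"
    using \<open>p \<in> A\<close> closure_hull \<open>r < c * snd p\<close> \<open>s < z (fst p)\<close> by (auto simp: U_def \<Phi>_def)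
  ultimately obtain d where "d \<in> convex hull B" "\<Phi> d \<in> U"
    using open_Int_closure_eq_empty[of U] by blast
  moreover have "convex hull B \<subseteq> A" using \<open>B \<subseteq> A\<close> \<open>convex A\<close> by (rule hull_minimal)
  ultimately have "fst d \<in> slice (fst_cut A c r) z e" "fst d \<in> fst_cut (convex hull B) c r"
    by (auto simp: slice_def fst_cut_def U_def \<Phi>_def s_def)
  then show ?thesis by blast
qed

lemma fst_cut_subset_closure_if_Sup_le:
  fixes A B :: "('a::real_normed_vector \<times> real) set"
  assumes "convex A" "bounded A" "B \<subseteq> A" "B \<noteq> {}" "c \<in> \<rat>"
    and det: "determining_slices (fst_cut A c r) f e"
    and Sup_le: "\<And>k a b. a \<in> \<rat> \<Longrightarrow> b \<in> \<rat> \<Longrightarrow>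
      Sup ((\<lambda>p. a * f k (fst p) + b * snd p) ` A) \<le> Sup ((\<lambda>p. a * f k (fst p) + b * snd p) ` B)"
  shows "fst_cut A c r \<subseteq> closure (fst_cut (convex hull B) c r)"
proof (cases "fst_cut A c r = {}")
  case False
  let ?E = "fst_cut (convex hull B) c r"
  have "?E \<subseteq> fst_cut A c r"
    using \<open>B \<subseteq> A\<close> \<open>convex A\<close> by (intro fst_cut_mono hull_minimal)
  moreover have "\<forall>k. ?E \<inter> slice (fst_cut A c r) (f k) (e k) \<noteq> {}"
  proof
    fix k
    have "bounded_linear (f k)" "e k > 0" using det by (simp_all add: determining_slices_def)
    then show "?E \<inter> slice (fst_cut A c r) (f k) (e k) \<noteq> {}"
      by (rule fst_cut_slice_meets_convex_hull[OF assms(1-5) _ _ False Sup_le])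
  qed
  ultimately have "fst_cut A c r \<subseteq> closure (convex hull ?E)"
    using det unfolding determining_slices_def by blast
  moreover have "convex hull ?E = ?E" by (simp add: convex_hull_eq convex_fst_cut)
  ultimately show ?thesis by simp
qed simp

lemma SCD_set_if_SCD_fst_cuts:
  fixes A :: "('a::real_normed_vector \<times> real) set"
  assumes "convex A" "bounded A" and cuts: "\<And>c r. SCD_set (fst_cut A c r)"
  shows "SCD_set A"
proof -
  obtain f :: "real \<Rightarrow> real \<Rightarrow> nat \<Rightarrow> 'a \<Rightarrow> real" and e
    where det: "\<And>c r. determining_slices (fst_cut A c r) (f c r) (e c r)"
  proof -
    have "\<forall>c r. \<exists>f e. determining_slices (fst_cut A c r) f e"
      using SCD_set_imp_determining_slices[OF cuts] by blast
    then show ?thesis using that unfolding choice_iff by blast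
  qed
  define g where "g c r k a b = (\<lambda>p. a * f c r k (fst p) + b * snd p)" for c r k a b
  have "bounded_linear (f c r k)" for c r k
    using det[of c r] by (simp add: determining_slices_def)
  then have g: "bounded_linear (g c r k a b)" for c r k a b
    unfolding g_def
    by (intro bounded_linear_add bounded_linear_const_mult bounded_linear_snd
        bounded_linear_compose[OF _ bounded_linear_fst])
  define S where "S n = (case from_nat n :: rat \<times> rat \<times> nat \<times> rat \<times> rat \<times> nat of
    (c, r, k, a, b, m) \<Rightarrow> slice A (g (of_rat c) (of_rat r) k (of_rat a) (of_rat b)) (1 / real (Suc m)))"
    for n
  have "is_slice A (S n)" for n
    unfolding S_def by (simp add: is_slice_slice g split: prod.split)
  moreover have "A \<subseteq> closure (convex hull B)" if "B \<subseteq> A" and meets: "\<forall>n. B \<inter> S n \<noteq> {}" for B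
  proof -
    have "B \<noteq> {}" using meets by blast
    have Sup_le: "Sup (g c r k a b ` A) \<le> Sup (g c r k a b ` B)"
      if rat: "c \<in> \<rat>" "r \<in> \<rat>" "a \<in> \<rat>" "b \<in> \<rat>" for c r k a b
    proof (rule Sup_image_le_if_meets_slices[OF \<open>bounded A\<close> g \<open>B \<subseteq> A\<close>])
      fix m
      obtain c' r' a' b' where "c = of_rat c'" "r = of_rat r'" "a = of_rat a'" "b = of_rat b'"
        using rat unfolding Rats_def by blast
      then show "B \<inter> slice A (g c r k a b) (1 / real (Suc m)) \<noteq> {}"
        using meets[rule_format, of "to_nat (c', r', k, a', b', m)"] by (simp add: S_def)
    qed
    have "fst_cut A c r \<subseteq> closure (fst_cut (convex hull B) c r)" if "c \<in> {1, -1}" "r \<in> \<rat>" for c r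
    proof -
      have "c \<in> \<rat>" using that(1) by auto
      from fst_cut_subset_closure_if_Sup_le[OF assms(1,2) \<open>B \<subseteq> A\<close> \<open>B \<noteq> {}\<close> this det
          Sup_le[OF this \<open>r \<in> \<rat>\<close>, unfolded g_def]]
      show ?thesis .
    qed
    then show "A \<subseteq> closure (convex hull B)"
      by (rule subset_closure_if_fst_cuts_close[OF convex_convex_hull])
  qed
  ultimately show ?thesis unfolding SCD_set_def using assms(1,2) by blast
qed

theorem lemma5p12:
  fixes T :: "'a::banach \<Rightarrow> 'b::banach" and xs :: "'a \<Rightarrow> real"
  assumes "hereditary_SCD_operator T"
    and "bounded_linear xs"
  shows "SCD_operator (\<lambda>x. (T x, xs x))"
proof -
  have "bounded_linear T" and hereditary: "\<And>C. C \<subseteq> T ` cball 0 1 \<Longrightarrow> convex C \<Longrightarrow> SCD_set C"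
    using assms(1) unfolding hereditary_SCD_operator_def by blast+
  have F: "bounded_linear (\<lambda>x. (T x, xs x))"
    using \<open>bounded_linear T\<close> assms(2) by (rule bounded_linear_Pair)
  define A where "A = (\<lambda>x. (T x, xs x)) ` cball (0::'a) 1"
  have "convex A" "bounded A"
    unfolding A_def using F by (auto intro: convex_linear_image bounded_linear_image bounded_linear.linear)
  moreover have "SCD_set (fst_cut A c r)" for c r
  proof (rule hereditary)
    show "fst_cut A c r \<subseteq> T ` cball 0 1" using fst_cut_subset[of A c r] by (simp add: A_def image_image)
    show "convex (fst_cut A c r)" using \<open>convex A\<close> by (rule convex_fst_cut)
  qed
  ultimately show ?thesis using F SCD_set_if_SCD_fst_cuts unfolding SCD_operator_def A_def by blast
qed

end
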